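(* Let $\mathcal{D}$ be a clocked basic action theory and $K\in\mathbb{N}$ at least as large as every natural-number constant mentioned in $\mathcal{D}$. Then Algorithm 1 (described in the context) terminates on input $(\mathcal{D},K)$ and returns the time-abstract transition system $\mathcal{T}_{\mathcal{D}}$, in the sense that for every sequence of states $p$ starting in $[S_0]_{\approx_{\mathcal{D}K}}$, $p$ is a path in the returned transition system iff $p$ is a path in $\mathcal{T}_{\mathcal{D}}$.
   Context: Situation calculus setting: sorts action, situation, object and time (the real numbers); $S_0$ initial situation; $\mathit{do}(a,s)$ the successor situation; $\mathcal{S}$ is the set of ground situations. Fluents are relation or function symbols with last argument a situation and other arguments objects; finitely many fluents, a finite set $\mathcal{A}$ of action types (action type $A$ has $|A|$ object arguments), finite set $\mathcal{O}$ of object constants (unique names, domain closure). A formula is uniform in $s$ if it mentions no situation term other than $s$ and does not mention $\mathit{Poss}$. A BAT is $\mathcal{D} = \mathcal{D}_0 \cup \mathcal{D}_{poss} \cup \mathcal{D}_{ssa} \cup \mathcal{D}_{ca} \cup \mathcal{D}_{co} \cup \Sigma$ (initial description uniform in $S_0$ with complete information, precondition axioms $\mathit{Poss}(A(\vec x),s)\equiv\phi_A(\vec x,s)$, successor state axioms, domain closure and unique name axioms for actions and objects, foundational axioms including $\sqsubset$); write $\mathcal{D}_c=\mathcal{D}_{ca}\cup\mathcal{D}_{co}$. $\mathit{Exec}(s)$ abbreviates $\forall a,s'(\mathit{do}(a,s')\sqsubseteq s\supset\mathit{Poss}(a,s'))$. Clock comparison: $f(\vec x,s)\bowtie v$ or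 $v\bowtie v'$ ($f$ functional fluent, $v,v'\in\mathbb{N}$, $\bowtie\in\{<,\leq,=,\geq,>\}$). Clocked formula: every atomic subformula mentioning a time term is a clock comparison; time-independent: no time term. A BAT is clocked if there is a distinguished action type $\mathit{wait}(t)$ (others have no time argument) and: functional fluents take time values and are $0$ at $S_0$; each functional fluent has successor state axiom $f(\vec o,\mathit{do}(a,s))=y \equiv \exists t\,(a=\mathit{wait}(t)\wedge y=f(\vec o,s)+t) \vee (\neg\exists t\, a=\mathit{wait}(t)) \wedge (\phi_f(\vec o,a,s)\wedge y=0 \vee \neg\phi_f(\vec o,a,s)\wedge y=f(\vec o,s))$ with $\phi_f$ time-independent, uniform in $s$; relational successor state axioms and precondition axioms have clocked right-hand sides uniform in $s$; $\mathit{Poss}(\mathit{wait}(t),s)\equiv\top$. Functional fluents are clocks; $\mathcal{C}$ the ground situation-suppressed clock terms; $\nu_\sigma(\omega)=\tau$ iff $\mathcal{D}\models\omega[\sigma]=\tau$; for $\tau\geq0$, $\nu+\tau$ is the valuation $\omega\mapsto\nu(\omega)+\tau$. For $u,v\geq0$: $u\sim_K v$ iff both $>K$, or both $\leq K$ with equal floors and equal ceilings; $\mathrm{fract}(v)=v-\lfloor v\rfloor$ if $v\leq K$, else $0$. Valuations satisfy $\nu\cong_K\nu'$ iff $\nu(\omega)\sim_K\nu'(\omega)$ for all $\omega$ and $\mathrm{fract}(\nu(\omega))\leq\mathrm{fract}(\nu(\omega'))$ iff $\mathrm{fract}(\nu'(\omega))\leq\mathrm{fract}(\nu'(\omega'))$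 for all $\omega,\omega'$. $\sigma_1\approx_{\mathcal{D}K}\sigma_2$ iff they entail the same ground relational fluent atoms and $\nu_{\sigma_1}\cong_K\nu_{\sigma_2}$; $[\sigma]_{\approx_{\mathcal{D}K}}$ is the class of $\sigma$. The time-abstract transition system $\mathcal{T}_{\mathcal{D}}$ has states among $\mathcal{S}/\approx_{\mathcal{D}K}$, initial state $[S_0]_{\approx_{\mathcal{D}K}}$, and transitions $[\sigma]\rightarrow[\sigma']$ whenever $\sigma'=\mathit{do}(\alpha,\sigma)$ for a ground action $\alpha$ and $\mathcal{D}\models\mathit{Exec}(\sigma')$. $\mathcal{R}$ denotes the regression operator, which transforms a formula about a situation $\mathit{do}([\alpha_1;\dots;\alpha_n],S_0)$ into an equivalent formula uniform in $S_0$ by repeatedly replacing $\mathit{Poss}$ atoms and fluent atoms by the right-hand sides of the corresponding axioms (a clock comparison $f(\vec\rho,\mathit{do}(\mathit{wait}(t),\sigma))\bowtie r$ becomes $f(\vec\rho,\sigma)\bowtie r-t$). $\mathrm{TSuccs}(\nu,K)$ is a computable finite set of nonnegative reals such that for every $\tau\in\mathbb{R}_{\geq0}$ there is $\tau'\in\mathrm{TSuccs}(\nu,K)$ with $\nu+\tau\cong_K\nu+\tau'$. Algorithm 1: set $\mathit{Open}:=\{S_0\}$, $V:=\{[S_0]_{\approx_{\mathcal{D}K}}\}$, $E:=\emptyset$. While $\mathit{Open}\neq\emptyset$: remove some $\sigma$ from $\mathit{Open}$; let $\mathit{Acts}:=\{A(\vec\rho)\mid A\in\mathcal{A}\setminus\{\mathit{wait}\},\vec\rho\in\mathcal{O}^{|A|}\}\cup\{\mathit{wait}(\tau)\mid\tau\in\mathrm{TSuccs}(\nu_\sigma,K)\}$;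 for each $\alpha\in\mathit{Acts}$ with $\mathcal{D}_0\cup\mathcal{D}_c\models\mathcal{R}[\mathit{Poss}(\alpha,\sigma)]$: if $[\mathit{do}(\alpha,\sigma)]_{\approx_{\mathcal{D}K}}\notin V$, add it to $V$ and add $\mathit{do}(\alpha,\sigma)$ to $\mathit{Open}$; in any case add $([\sigma]_{\approx_{\mathcal{D}K}},[\mathit{do}(\alpha,\sigma)]_{\approx_{\mathcal{D}K}})$ to $E$. Finally return $(V,[S_0]_{\approx_{\mathcal{D}K}},E)$. *)

theory Defs
  imports Complex_Main
begin

section \<open>Syntax of clocked formulas (situation-suppressed, uniform in s)\<close>

datatype 'o trm = TVar nat | TConst 'o

datatype cmp = CLt | CLe | CEq | CGe | CGt

datatype ('a, 'o) gact = Act 'a "'o list" | Wait real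

text \<open>Formulas. FAct A ts is the atom  a = A(ts)  for the distinguished action variable a
  of a successor state axiom; FClk is a clock comparison f(ts,s) op n; FNat is n op m.\<close>
datatype ('o, 'a, 'r, 'c) fm =
    FTrue
  | FRel 'r "'o trm list"
  | FEqO "'o trm" "'o trm"
  | FAct 'a "'o trm list"
  | FClk 'c "'o trm list" cmp nat
  | FNat nat cmp nat
  | FNot "('o, 'a, 'r, 'c) fm"
  | FAnd "('o, 'a, 'r, 'c) fm" "('o, 'a, 'r, 'c) fm"
  | FEx nat "('o, 'a, 'r, 'c) fm"

fun tval :: "(nat \<Rightarrow> 'o) \<Rightarrow> 'o trm \<Rightarrow> 'o" where
  "tval e (TVar i) = e i"
| "tval e (TConst c) = c"

fun cmpr :: "cmp \<Rightarrow> real \<Rightarrow> real \<Rightarrow> bool" where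
  "cmpr CLt x y = (x < y)"
| "cmpr CLe x y = (x \<le> y)"
| "cmpr CEq x y = (x = y)"
| "cmpr CGe x y = (x \<ge> y)"
| "cmpr CGt x y = (x > y)"

text \<open>Object quantifiers range over all objects (domain closure: the objects are UNIV).\<close>
fun holds :: "('r \<Rightarrow> 'o list \<Rightarrow> bool) \<Rightarrow> ('c \<Rightarrow> 'o list \<Rightarrow> real) \<Rightarrow> ('a, 'o) gact
              \<Rightarrow> (nat \<Rightarrow> 'o) \<Rightarrow> ('o, 'a, 'r, 'c) fm \<Rightarrow> bool" where
  "holds R Cl a e FTrue = True"
| "holds R Cl a e (FRel r ts) = R r (map (tval e) ts)"
| "holds R Cl a e (FEqO t u) = (tval e t = tval e u)"
| "holds R Cl a e (FAct A ts) = (a = Act A (map (tval e) ts))"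
| "holds R Cl a e (FClk c ts op n) = cmpr op (Cl c (map (tval e) ts)) (real n)"
| "holds R Cl a e (FNat m op n) = cmpr op (real m) (real n)"
| "holds R Cl a e (FNot \<phi>) = (\<not> holds R Cl a e \<phi>)"
| "holds R Cl a e (FAnd \<phi> \<psi>) = (holds R Cl a e \<phi> \<and> holds R Cl a e \<psi>)"
| "holds R Cl a e (FEx x \<phi>) = (\<exists>d. holds R Cl a (e(x := d)) \<phi>)"

fun tfv :: "'o trm \<Rightarrow> nat set" where
  "tfv (TVar i) = {i}"
| "tfv (TConst c) = {}"

fun fv :: "('o, 'a, 'r, 'c) fm \<Rightarrow> nat set" where
  "fv FTrue = {}"
| "fv (FRel r ts) = (\<Union>t\<in>set ts. tfv t)"
| "fv (FEqO t u) = tfv t \<union> tfv u"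
| "fv (FAct A ts) = (\<Union>t\<in>set ts. tfv t)"
| "fv (FClk c ts op n) = (\<Union>t\<in>set ts. tfv t)"
| "fv (FNat m op n) = {}"
| "fv (FNot \<phi>) = fv \<phi>"
| "fv (FAnd \<phi> \<psi>) = fv \<phi> \<union> fv \<psi>"
| "fv (FEx x \<phi>) = fv \<phi> - {x}"

fun nconsts :: "('o, 'a, 'r, 'c) fm \<Rightarrow> nat set" where
  "nconsts (FClk c ts op n) = {n}"
| "nconsts (FNat m op n) = {m, n}"
| "nconsts (FNot \<phi>) = nconsts \<phi>"
| "nconsts (FAnd \<phi> \<psi>) = nconsts \<phi> \<union> nconsts \<psi>"
| "nconsts (FEx x \<phi>) = nconsts \<phi>"
| "nconsts _ = {}"

fun time_indep :: "('o, 'a, 'r, 'c) fm \<Rightarrow> bool" where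
  "time_indep (FClk c ts op n) = False"
| "time_indep (FNat m op n) = False"
| "time_indep (FNot \<phi>) = time_indep \<phi>"
| "time_indep (FAnd \<phi> \<psi>) = (time_indep \<phi> \<and> time_indep \<psi>)"
| "time_indep (FEx x \<phi>) = time_indep \<phi>"
| "time_indep _ = True"

fun act_free :: "('o, 'a, 'r, 'c) fm \<Rightarrow> bool" where
  "act_free (FAct A ts) = False"
| "act_free (FNot \<phi>) = act_free \<phi>"
| "act_free (FAnd \<phi> \<psi>) = (act_free \<phi> \<and> act_free \<psi>)"
| "act_free (FEx x \<phi>) = act_free \<phi>"
| "act_free _ = True"

section \<open>Clocked basic action theories\<close>

text \<open>A clocked BAT over a finite object domain 'o, finite non-wait action types 'a,
  finitely many relational fluents 'r and clocks (functional fluents) 'c.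
  init_rel is the (complete) initial description of the relational fluents; all clocks are 0
  in S0. poss_fm A is the right-hand side of the precondition axiom of A (free variables
  0..|A|-1 are the action arguments); ssa_rel R is the right-hand side of the successor state
  axiom of R (free variables 0..|R|-1 the fluent arguments, plus the action variable);
  reset_fm f is the condition phi_f of the successor state axiom of clock f.
  Poss(wait(t),s) is always true and clocks advance by t under wait(t).\<close>
record ('o, 'a, 'r, 'c) bat =
  act_ar :: "'a \<Rightarrow> nat"
  rel_ar :: "'r \<Rightarrow> nat"
  clk_ar :: "'c \<Rightarrow> nat"
  init_rel :: "'r \<Rightarrow> 'o list \<Rightarrow> bool"
  poss_fm :: "'a \<Rightarrow> ('o, 'a, 'r, 'c) fm"
  ssa_rel :: "'r \<Rightarrow> ('o, 'a, 'r, 'c) fm"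
  reset_fm :: "'c \<Rightarrow> ('o, 'a, 'r, 'c) fm"

fun wf_fm :: "('o, 'a, 'r, 'c, 'z) bat_scheme \<Rightarrow> ('o, 'a, 'r, 'c) fm \<Rightarrow> bool" where
  "wf_fm B (FRel r ts) = (length ts = rel_ar B r)"
| "wf_fm B (FAct A ts) = (length ts = act_ar B A)"
| "wf_fm B (FClk c ts op n) = (length ts = clk_ar B c)"
| "wf_fm B (FNot \<phi>) = wf_fm B \<phi>"
| "wf_fm B (FAnd \<phi> \<psi>) = (wf_fm B \<phi> \<and> wf_fm B \<psi>)"
| "wf_fm B (FEx x \<phi>) = wf_fm B \<phi>"
| "wf_fm B _ = True"

definition clocked_bat :: "('o, 'a, 'r, 'c) bat \<Rightarrow> bool" where
  "clocked_bat B \<longleftrightarrow>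
     (\<forall>A. wf_fm B (poss_fm B A) \<and> act_free (poss_fm B A) \<and> fv (poss_fm B A) \<subseteq> {..<act_ar B A})
   \<and> (\<forall>r. wf_fm B (ssa_rel B r) \<and> fv (ssa_rel B r) \<subseteq> {..<rel_ar B r})
   \<and> (\<forall>c. wf_fm B (reset_fm B c) \<and> time_indep (reset_fm B c) \<and> fv (reset_fm B c) \<subseteq> {..<clk_ar B c})"

definition consts_bounded :: "('o, 'a, 'r, 'c) bat \<Rightarrow> nat \<Rightarrow> bool" where
  "consts_bounded B K \<longleftrightarrow>
     (\<forall>A. \<forall>n\<in>nconsts (poss_fm B A). n \<le> K)
   \<and> (\<forall>r. \<forall>n\<in>nconsts (ssa_rel B r). n \<le> K)
   \<and> (\<forall>c. \<forall>n\<in>nconsts (reset_fm B c). n \<le> K)"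

section \<open>Situations and their (unique) semantics\<close>

text \<open>A situation is the list of its actions, most recent first: S0 = [], do(a,s) = a # s.\<close>
type_synonym ('a, 'o) sit = "('a, 'o) gact list"

fun legal :: "('o, 'a, 'r, 'c) bat \<Rightarrow> ('a, 'o) gact \<Rightarrow> bool" where
  "legal B (Act A os) = (length os = act_ar B A)"
| "legal B (Wait t) = (t \<ge> 0)"

definition gsit :: "('o, 'a, 'r, 'c) bat \<Rightarrow> ('a, 'o) sit \<Rightarrow> bool" where
  "gsit B \<sigma> \<longleftrightarrow> (\<forall>\<alpha>\<in>set \<sigma>. legal B \<alpha>)"

fun st :: "('o, 'a, 'r, 'c) bat \<Rightarrow> ('a, 'o) sit
           \<Rightarrow> ('r \<Rightarrow> 'o list \<Rightarrow> bool) \<times> ('c \<Rightarrow> 'o list \<Rightarrow> real)" where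
  "st B [] = (init_rel B, (\<lambda>c os. 0))"
| "st B (\<alpha> # \<sigma>) =
     (let R = fst (st B \<sigma>); Cl = snd (st B \<sigma>) in
       ((\<lambda>r os. holds R Cl \<alpha> (nth os) (ssa_rel B r)),
        (\<lambda>c os. case \<alpha> of
                   Wait t \<Rightarrow> Cl c os + t
                 | Act A xs \<Rightarrow> (if holds R Cl \<alpha> (nth os) (reset_fm B c) then 0 else Cl c os))))"

fun poss :: "('o, 'a, 'r, 'c) bat \<Rightarrow> ('a, 'o) gact \<Rightarrow> ('a, 'o) sit \<Rightarrow> bool" where
  "poss B (Wait t) \<sigma> = True"
| "poss B (Act A os) \<sigma> = holds (fst (st B \<sigma>)) (snd (st B \<sigma>)) (Act A os) (nth os) (poss_fm B A)"

definition exec :: "('o, 'a, 'r, 'c) bat \<Rightarrow> ('a, 'o) sit \<Rightarrow> bool" where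
  "exec B \<sigma> \<longleftrightarrow> (\<forall>i < length \<sigma>. poss B (\<sigma> ! i) (drop (Suc i) \<sigma>))"

section \<open>Clock valuations and region equivalence\<close>

definition clk_terms :: "('o, 'a, 'r, 'c) bat \<Rightarrow> ('c \<times> 'o list) set" where
  "clk_terms B = {(c, os). length os = clk_ar B c}"

definition nu :: "('o, 'a, 'r, 'c) bat \<Rightarrow> ('a, 'o) sit \<Rightarrow> ('c \<times> 'o list) \<Rightarrow> real" where
  "nu B \<sigma> = (\<lambda>(c, os). snd (st B \<sigma>) c os)"

definition simK :: "nat \<Rightarrow> real \<Rightarrow> real \<Rightarrow> bool" where
  "simK K u v \<longleftrightarrow> (u > real K \<and> v > real K)
     \<or> (u \<le> real K \<and> v \<le> real K \<and> \<lfloor>u\<rfloor> = \<lfloor>v\<rfloor> \<and> \<lceil>u\<rceil> = \<lceil>v\<rceil>)"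

definition fractK :: "nat \<Rightarrow> real \<Rightarrow> real" where
  "fractK K v = (if v \<le> real K then v - of_int \<lfloor>v\<rfloor> else 0)"

definition cong_val :: "('o, 'a, 'r, 'c) bat \<Rightarrow> nat \<Rightarrow> ('c \<times> 'o list \<Rightarrow> real)
                        \<Rightarrow> ('c \<times> 'o list \<Rightarrow> real) \<Rightarrow> bool" where
  "cong_val B K \<nu> \<nu>' \<longleftrightarrow>
     (\<forall>\<omega>\<in>clk_terms B. simK K (\<nu> \<omega>) (\<nu>' \<omega>))
   \<and> (\<forall>\<omega>\<in>clk_terms B. \<forall>\<omega>'\<in>clk_terms B.
        (fractK K (\<nu> \<omega>) \<le> fractK K (\<nu> \<omega>')) \<longleftrightarrow> (fractK K (\<nu>' \<omega>) \<le> fractK K (\<nu>' \<omega>')))"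

definition approx :: "('o, 'a, 'r, 'c) bat \<Rightarrow> nat \<Rightarrow> ('a, 'o) sit \<Rightarrow> ('a, 'o) sit \<Rightarrow> bool" where
  "approx B K \<sigma>1 \<sigma>2 \<longleftrightarrow>
     (\<forall>r os. length os = rel_ar B r \<longrightarrow> fst (st B \<sigma>1) r os = fst (st B \<sigma>2) r os)
   \<and> cong_val B K (nu B \<sigma>1) (nu B \<sigma>2)"

definition cls :: "('o, 'a, 'r, 'c) bat \<Rightarrow> nat \<Rightarrow> ('a, 'o) sit \<Rightarrow> ('a, 'o) sit set" where
  "cls B K \<sigma> = {\<sigma>'. gsit B \<sigma>' \<and> approx B K \<sigma>' \<sigma>}"

definition td_trans :: "('o, 'a, 'r, 'c) bat \<Rightarrow> nat \<Rightarrow> ('a, 'o) sit set \<Rightarrow> ('a, 'o) sit set \<Rightarrow> bool" where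
  "td_trans B K X Y \<longleftrightarrow>
     (\<exists>\<sigma> \<alpha>. gsit B (\<alpha> # \<sigma>) \<and> exec B (\<alpha> # \<sigma>) \<and> X = cls B K \<sigma> \<and> Y = cls B K (\<alpha> # \<sigma>))"

text \<open>Admissible TSuccs functions: finite sets of nonnegative reals representing all
  time successors up to region equivalence (for nonnegative valuations).\<close>
definition tsuccs_ok :: "('o, 'a, 'r, 'c) bat
                         \<Rightarrow> (('c \<times> 'o list \<Rightarrow> real) \<Rightarrow> nat \<Rightarrow> real set) \<Rightarrow> bool" where
  "tsuccs_ok B ts \<longleftrightarrow>
     (\<forall>\<nu> K. (\<forall>\<omega>\<in>clk_terms B. \<nu> \<omega> \<ge> 0) \<longrightarrow>
        finite (ts \<nu> K) \<and> (\<forall>\<tau>\<in>ts \<nu> K. \<tau> \<ge> 0)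
        \<and> (\<forall>\<tau>::real. \<tau> \<ge> 0 \<longrightarrow>
              (\<exists>\<tau>'\<in>ts \<nu> K. cong_val B K (\<lambda>\<omega>. \<nu> \<omega> + \<tau>) (\<lambda>\<omega>. \<nu> \<omega> + \<tau>'))))"

section \<open>Algorithm 1 as a (nondeterministic) small-step transition relation\<close>

text \<open>Algorithm state: (Open, V, E, current), where current = Some (sigma, remaining Acts)
  while the for-loop over Acts for the removed situation sigma is running.\<close>
type_synonym ('a, 'o) alg_state =
  "('a, 'o) sit set \<times> ('a, 'o) sit set set \<times> (('a, 'o) sit set \<times> ('a, 'o) sit set) set
   \<times> (('a, 'o) sit \<times> ('a, 'o) gact set) option"

definition acts :: "('o, 'a, 'r, 'c) bat \<Rightarrow> nat \<Rightarrow> (('c \<times> 'o list \<Rightarrow> real) \<Rightarrow> nat \<Rightarrow> real set)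
                    \<Rightarrow> ('a, 'o) sit \<Rightarrow> ('a, 'o) gact set" where
  "acts B K ts \<sigma> = {Act A os | A os. length os = act_ar B A} \<union> Wait ` ts (nu B \<sigma>) K"

definition alg_init :: "('o, 'a, 'r, 'c) bat \<Rightarrow> nat \<Rightarrow> ('a, 'o) alg_state" where
  "alg_init B K = ({[]}, {cls B K []}, {}, None)"

inductive alg_step :: "('o, 'a, 'r, 'c) bat \<Rightarrow> nat \<Rightarrow> (('c \<times> 'o list \<Rightarrow> real) \<Rightarrow> nat \<Rightarrow> real set)
                       \<Rightarrow> ('a, 'o) alg_state \<Rightarrow> ('a, 'o) alg_state \<Rightarrow> bool"
  for B K ts where
  pick: "\<sigma> \<in> Op \<Longrightarrow> alg_step B K ts (Op, V, E, None) (Op - {\<sigma>}, V, E, Some (\<sigma>, acts B K ts \<sigma>))"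
| act_poss: "\<alpha> \<in> As \<Longrightarrow> poss B \<alpha> \<sigma> \<Longrightarrow>
    alg_step B K ts (Op, V, E, Some (\<sigma>, As))
      (if cls B K (\<alpha> # \<sigma>) \<notin> V then Op \<union> {\<alpha> # \<sigma>} else Op,
       V \<union> {cls B K (\<alpha> # \<sigma>)},
       E \<union> {(cls B K \<sigma>, cls B K (\<alpha> # \<sigma>))},
       Some (\<sigma>, As - {\<alpha>}))"
| act_not_poss: "\<alpha> \<in> As \<Longrightarrow> \<not> poss B \<alpha> \<sigma> \<Longrightarrow>
    alg_step B K ts (Op, V, E, Some (\<sigma>, As)) (Op, V, E, Some (\<sigma>, As - {\<alpha>}))"
| loop_done: "alg_step B K ts (Op, V, E, Some (\<sigma>, {})) (Op, V, E, None)"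

definition alg_final :: "('a, 'o) alg_state \<Rightarrow> bool" where
  "alg_final s \<longleftrightarrow> (case s of (Op, V, E, cur) \<Rightarrow> Op = {} \<and> cur = None)"

definition alg_edges :: "('a, 'o) alg_state \<Rightarrow> (('a, 'o) sit set \<times> ('a, 'o) sit set) set" where
  "alg_edges s = (case s of (Op, V, E, cur) \<Rightarrow> E)"

end

theory Submission
  imports Defs "HOL-Library.FuncSet"
begin

text \<open>
Region equivalence is a time-abstract bisimulation on clock valuations: it survives resets, and
a delay of one valuation can be matched by some delay of any equivalent valuation, because both
order their fractional parts in the same way, so the cut at 1 - d can be moved to a matching
cut 1 - d' of the other valuation. As every constant of the theory is at most K, formulas cannot
distinguish equivalent situations, so equivalence of situations is a bisimulation of the
situation tree, and by the defining property of TSuccs the finitely many actions tried by the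
algorithm already realise every transition up to equivalence.

Termination: there are only finitely many classes, and each step decreases the number of
unvisited classes, the size of the open set, or the number of remaining actions, in this
lexicographic order. Correctness: an invariant says that every recorded edge is a transition and
every visited class has a representative that is open, being expanded, or already expanded; at
the end all are expanded, so a path through visited classes is a path in the returned graph.
\<close>

section \<open>Regions of a single clock\<close>

lemma ceiling_via_floor: "\<lceil>v::real\<rceil> = (if v \<in> \<int> then \<lfloor>v\<rfloor> else \<lfloor>v\<rfloor> + 1)"
  by (metis Ints_cases Ints_of_int ceiling_altdef floor_of_int)

text \<open>A value up to K is determined up to simK by its integer part and by whether it is an
  integer (which fixes the ceiling); all values above K form a single region.\<close>

definition clock_region :: "nat \<Rightarrow> real \<Rightarrow> (int \<times> bool) option" where
  "clock_region K v = (if v > real K then None else Some (\<lfloor>v\<rfloor>, v \<in> \<int>))"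

lemma simK_iff_clock_region: "simK K u v \<longleftrightarrow> clock_region K u = clock_region K v"
  unfolding simK_def clock_region_def ceiling_via_floor by auto

lemma clock_region_cong:
  assumes "\<lfloor>u\<rfloor> = \<lfloor>v\<rfloor>" "u \<in> \<int> \<longleftrightarrow> v \<in> \<int>"
  shows "clock_region K u = clock_region K v"
proof -
  have "\<lceil>u\<rceil> = \<lceil>v\<rceil>"
    using assms ceiling_via_floor[of u] ceiling_via_floor[of v] by simp
  then have "u \<le> real K \<longleftrightarrow> v \<le> real K"
    by (metis ceiling_le_iff of_int_of_nat_eq)
  then show ?thesis using assms by (auto simp: clock_region_def)
qed

lemma clock_region_nonneg: "0 \<le> v \<Longrightarrow> clock_region K v \<in> insert None (Some ` ({0..int K} \<times> UNIV))"
  by (auto simp: clock_region_def le_floor_iff floor_le_iff)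

lemma simK_gt_iff: "simK K u v \<Longrightarrow> u > real K \<longleftrightarrow> v > real K"
  by (auto simp: simK_def)

lemma simK_cmpr:
  assumes "simK K u v" "n \<le> K"
  shows "cmpr op u (real n) = cmpr op v (real n)"
proof (cases "u > real K")
  case True
  then have "u > real n" "v > real n" using assms simK_gt_iff by fastforce+
  then show ?thesis by (cases op) auto
next
  case False
  then have "\<lfloor>u\<rfloor> = \<lfloor>v\<rfloor>" "\<lceil>u\<rceil> = \<lceil>v\<rceil>" using assms(1) by (auto simp: simK_def)
  then have "u < real n \<longleftrightarrow> v < real n" "u \<le> real n \<longleftrightarrow> v \<le> real n"
    by (metis floor_less_iff of_int_of_nat_eq, metis ceiling_le_iff of_int_of_nat_eq)
  then show ?thesis by (cases op) auto
qed

lemma fractK_eq_frac: "fractK K v = (if v \<le> real K then frac v else 0)"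
  by (simp add: fractK_def frac_def)

lemma fractK_ge_0: "0 \<le> fractK K v"
  by (simp add: fractK_eq_frac)

lemma fractK_lt_1: "fractK K v < 1"
  by (simp add: fractK_eq_frac frac_lt_1)

lemma fractK_0 [simp]: "fractK K 0 = 0"
  by (simp add: fractK_def)

lemma simK_fractK_eq_0_iff: "simK K u v \<Longrightarrow> fractK K u = 0 \<longleftrightarrow> fractK K v = 0"
  by (auto simp: simK_iff_clock_region clock_region_def fractK_eq_frac split: if_splits)

lemma simK_add_nat:
  assumes "simK K u v"
  shows "simK K (u + real m) (v + real m)"
proof (cases "u > real K")
  case True
  then show ?thesis using assms by (auto simp: simK_def)
next
  case False
  then have "\<lfloor>u\<rfloor> = \<lfloor>v\<rfloor>" "u \<in> \<int> \<longleftrightarrow> v \<in> \<int>"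
    using assms by (auto simp: simK_iff_clock_region clock_region_def split: if_splits)
  moreover have "\<lfloor>w + real m\<rfloor> = \<lfloor>w\<rfloor> + int m" "w + real m \<in> \<int> \<longleftrightarrow> w \<in> \<int>" for w :: real
    using floor_add_int[of w "int m"] Ints_diff[of "w + real m" "real m"] by auto
  ultimately show ?thesis unfolding simK_iff_clock_region by (intro clock_region_cong) auto
qed

lemma fractK_add_nat: "fractK K (u + real m) = (if u + real m > real K then 0 else fractK K u)"
  by (auto simp: fractK_def)

lemma floor_add_fraction:
  fixes u d :: real
  assumes "0 < d" "d < 1"
  shows "\<lfloor>u + d\<rfloor> = (if frac u < 1 - d then \<lfloor>u\<rfloor> else \<lfloor>u\<rfloor> + 1)"
  using floor_add[of u d] floor_unique[of 0 d] assms by (auto simp: frac_eq)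

lemma Ints_add_fraction_iff:
  fixes u d :: real
  assumes "0 < d" "d < 1"
  shows "u + d \<in> \<int> \<longleftrightarrow> frac u = 1 - d"
proof -
  have "frac (u + d) = (if frac u + d < 1 then frac u + d else frac u + d - 1)"
    using frac_add[of u d] assms by (simp add: frac_eq)
  then have "frac (u + d) = 0 \<longleftrightarrow> frac u = 1 - d"
    using assms frac_ge_0[of u] by (auto simp del: frac_ge_0 frac_eq_0_iff)
  then show ?thesis by simp
qed

lemma simK_add_fraction:
  assumes "simK K u v" "0 < d" "d < 1" "0 < d'" "d' < 1"
    "fractK K u < 1 - d \<longleftrightarrow> fractK K v < 1 - d'" "fractK K u = 1 - d \<longleftrightarrow> fractK K v = 1 - d'"
  shows "simK K (u + d) (v + d')"
proof (cases "u > real K")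
  case True
  then show ?thesis using assms by (auto simp: simK_def)
next
  case False
  then have "v \<le> real K" using assms(1) simK_gt_iff by fastforce
  then have "\<lfloor>u\<rfloor> = \<lfloor>v\<rfloor>" "frac u < 1 - d \<longleftrightarrow> frac v < 1 - d'" "frac u = 1 - d \<longleftrightarrow> frac v = 1 - d'"
    using assms False by (auto simp: simK_iff_clock_region clock_region_def fractK_eq_frac)
  then show ?thesis unfolding simK_iff_clock_region using assms(2-5)
    by (intro clock_region_cong) (simp_all add: floor_add_fraction Ints_add_fraction_iff)
qed

lemma fractK_add_fraction:
  assumes "0 < d" "d < 1"
  shows "fractK K (u + d) = (if u + d > real K then 0
            else if fractK K u < 1 - d then fractK K u + d else fractK K u + d - 1)"
  using assms frac_add[of u d] by (auto simp: fractK_eq_frac frac_eq)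

section \<open>Region equivalence of clock valuations\<close>

definition region_equiv :: "'w set \<Rightarrow> nat \<Rightarrow> ('w \<Rightarrow> real) \<Rightarrow> ('w \<Rightarrow> real) \<Rightarrow> bool" where
  "region_equiv C K x y \<longleftrightarrow> (\<forall>\<omega>\<in>C. simK K (x \<omega>) (y \<omega>)) \<and>
     (\<forall>\<omega>\<in>C. \<forall>\<omega>'\<in>C. fractK K (x \<omega>) \<le> fractK K (x \<omega>') \<longleftrightarrow> fractK K (y \<omega>) \<le> fractK K (y \<omega>'))"

lemma cong_val_eq_region_equiv: "cong_val B K = region_equiv (clk_terms B) K"
  by (simp add: fun_eq_iff cong_val_def region_equiv_def)

lemma region_equiv_trans: "region_equiv C K x y \<Longrightarrow> region_equiv C K y z \<Longrightarrow> region_equiv C K x z"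
  unfolding region_equiv_def simK_iff_clock_region by simp

lemma region_equiv_reset:
  assumes "region_equiv C K x y"
  shows "region_equiv C K (\<lambda>\<omega>. if \<omega> \<in> R then 0 else x \<omega>) (\<lambda>\<omega>. if \<omega> \<in> R then 0 else y \<omega>)"
proof -
  have "fractK K (x \<omega>) \<le> 0 \<longleftrightarrow> fractK K (y \<omega>) \<le> 0" if "\<omega> \<in> C" for \<omega>
    using assms that simK_fractK_eq_0_iff fractK_ge_0 by (fastforce simp: region_equiv_def eq_iff)
  then show ?thesis
    using assms by (auto simp: region_equiv_def simK_iff_clock_region fractK_ge_0)
qed

lemma region_equiv_add_nat:
  assumes "region_equiv C K x y"
  shows "region_equiv C K (\<lambda>\<omega>. x \<omega> + real m) (\<lambda>\<omega>. y \<omega> + real m)"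
  unfolding region_equiv_def
proof (intro conjI ballI)
  fix \<omega> assume "\<omega> \<in> C"
  then show "simK K (x \<omega> + real m) (y \<omega> + real m)"
    using assms simK_add_nat by (auto simp: region_equiv_def)
next
  fix \<omega> \<omega>' assume "\<omega> \<in> C" "\<omega>' \<in> C"
  then have s: "simK K (x \<omega>) (y \<omega>)" "simK K (x \<omega>') (y \<omega>')"
    and o: "fractK K (x \<omega>) \<le> fractK K (x \<omega>') \<longleftrightarrow> fractK K (y \<omega>) \<le> fractK K (y \<omega>')"
    using assms by (auto simp: region_equiv_def)
  show "fractK K (x \<omega> + real m) \<le> fractK K (x \<omega>' + real m) \<longleftrightarrow>
        fractK K (y \<omega> + real m) \<le> fractK K (y \<omega>' + real m)"
    unfolding fractK_add_nat
    using simK_gt_iff[OF simK_add_nat[OF s(1)]] simK_gt_iff[OF simK_add_nat[OF s(2)]]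
      simK_fractK_eq_0_iff[OF s(1)] o
    by (auto simp: fractK_ge_0 eq_iff)
qed

lemma order_pattern_cut:
  fixes A B :: "'w \<Rightarrow> real"
  assumes "finite C"
    and order: "\<forall>\<omega>\<in>C. \<forall>\<omega>'\<in>C. A \<omega> \<le> A \<omega>' \<longleftrightarrow> B \<omega> \<le> B \<omega>'"
    and zero: "\<forall>\<omega>\<in>C. A \<omega> = 0 \<longleftrightarrow> B \<omega> = 0"
    and range: "\<forall>\<omega>\<in>C. 0 \<le> A \<omega> \<and> A \<omega> < 1 \<and> 0 \<le> B \<omega> \<and> B \<omega> < 1"
    and s: "0 < s" "s < 1"
  obtains s' where "0 < s'" "s' < 1" "\<forall>\<omega>\<in>C. (A \<omega> < s \<longleftrightarrow> B \<omega> < s') \<and> (A \<omega> = s \<longleftrightarrow> B \<omega> = s')"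
proof -
  define Lo where "Lo = insert 0 (B ` {\<omega>\<in>C. A \<omega> < s})"
  define Hi where "Hi = insert 1 (B ` {\<omega>\<in>C. s < A \<omega>})"
  have fin: "finite Lo" "finite Hi"
    using \<open>finite C\<close> by (simp_all add: Lo_def Hi_def)
  have below: "l < B \<omega>" if "l \<in> Lo" "\<omega> \<in> C" "s \<le> A \<omega>" for l \<omega>
  proof -
    have "0 < B \<omega>" using zero range s that(2,3) by force
    moreover have "B \<omega>' < B \<omega>" if "\<omega>' \<in> C" "A \<omega>' < s" for \<omega>'
      using order that \<open>\<omega> \<in> C\<close> \<open>s \<le> A \<omega>\<close> by (meson le_less_trans not_le)
    ultimately show ?thesis using that(1) by (auto simp: Lo_def)
  qed
  have above: "B \<omega> < h" if "h \<in> Hi" "\<omega> \<in> C" "A \<omega> \<le> s" for h \<omega>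
  proof -
    have "B \<omega> < B \<omega>'" if "\<omega>' \<in> C" "s < A \<omega>'" for \<omega>'
      using order that \<open>\<omega> \<in> C\<close> \<open>A \<omega> \<le> s\<close> by (meson le_less_trans not_le)
    then show ?thesis using that(1,2) range by (auto simp: Hi_def)
  qed
  have Max_Lo: "Max Lo \<in> Lo" and Min_Hi: "Min Hi \<in> Hi"
    using fin by (intro Max_in Min_in; simp add: Lo_def Hi_def)+
  have gap: "Max Lo < Min Hi"
    using Max_Lo Min_Hi below range by (auto simp: Lo_def Hi_def)
  obtain s' where s': "Max Lo < s'" "s' < Min Hi" "\<forall>\<omega>\<in>C. A \<omega> = s \<longrightarrow> B \<omega> = s'"
  proof (cases "\<exists>\<omega>\<in>C. A \<omega> = s")
    case True
    then obtain \<omega>\<^sub>0 where "\<omega>\<^sub>0 \<in> C" "A \<omega>\<^sub>0 = s" by blast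
    have "B \<omega> = B \<omega>\<^sub>0" if "\<omega> \<in> C" "A \<omega> = s" for \<omega>
      using order that \<open>\<omega>\<^sub>0 \<in> C\<close> \<open>A \<omega>\<^sub>0 = s\<close> by (simp add: order.eq_iff)
    moreover have "Max Lo < B \<omega>\<^sub>0" "B \<omega>\<^sub>0 < Min Hi"
      using below[OF Max_Lo] above[OF Min_Hi] \<open>\<omega>\<^sub>0 \<in> C\<close> \<open>A \<omega>\<^sub>0 = s\<close> by simp_all
    ultimately show ?thesis using that by blast
  next
    case False
    then show ?thesis using that[of "(Max Lo + Min Hi) / 2"] gap by auto
  qed
  show ?thesis
  proof
    show "0 < s'" using s'(1) fin by (auto simp: Lo_def intro: le_less_trans[OF Max_ge])
    show "s' < 1" using s'(2) fin by (auto simp: Hi_def intro: less_le_trans[OF _ Min_le])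
    have "B \<omega> < s'" if "\<omega> \<in> C" "A \<omega> < s" for \<omega>
      using that s'(1) fin Max_ge[of Lo "B \<omega>"] by (auto simp: Lo_def)
    moreover have "s' < B \<omega>" if "\<omega> \<in> C" "s < A \<omega>" for \<omega>
      using that s'(2) fin Min_le[of Hi "B \<omega>"] by (auto simp: Hi_def)
    ultimately show "\<forall>\<omega>\<in>C. (A \<omega> < s \<longleftrightarrow> B \<omega> < s') \<and> (A \<omega> = s \<longleftrightarrow> B \<omega> = s')"
      using s'(3) by (metis less_asym less_irrefl linorder_neqE_linordered_idom)
  qed
qed

text \<open>For Z = (u + d > K) and A = fractK K u the two sides are fractK K (u + d) and its analogue
  (fractK_add_fraction); the right-hand side depends on A and A' only through their order and
  their position relative to 1 - d.\<close>

lemma shifted_fract_le_iff: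
  fixes A A' d :: real
  assumes "0 \<le> A" "A < 1" "0 \<le> A'" "A' < 1" "0 < d" "d < 1"
  shows "(if Z then 0 else if A < 1 - d then A + d else A + d - 1)
           \<le> (if Z' then 0 else if A' < 1 - d then A' + d else A' + d - 1)
         \<longleftrightarrow> Z \<or> A = 1 - d \<or>
             \<not> Z' \<and> A' \<noteq> 1 - d \<and> ((A < 1 - d \<longleftrightarrow> A' < 1 - d) \<and> A \<le> A' \<or> \<not> A < 1 - d \<and> A' < 1 - d)"
  using assms by auto

lemma region_equiv_add_fraction:
  assumes "finite C" and equiv: "region_equiv C K x y" and d: "0 < d" "d < 1"
  obtains d' where "0 < d'" "d' < 1" "region_equiv C K (\<lambda>\<omega>. x \<omega> + d) (\<lambda>\<omega>. y \<omega> + d')"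
proof -
  let ?A = "\<lambda>\<omega>. fractK K (x \<omega>)" and ?B = "\<lambda>\<omega>. fractK K (y \<omega>)"
  have sim: "\<forall>\<omega>\<in>C. simK K (x \<omega>) (y \<omega>)"
    and order: "\<forall>\<omega>\<in>C. \<forall>\<omega>'\<in>C. ?A \<omega> \<le> ?A \<omega>' \<longleftrightarrow> ?B \<omega> \<le> ?B \<omega>'"
    using equiv by (simp_all add: region_equiv_def)
  obtain s' where s': "0 < s'" "s' < 1"
    and cut: "\<forall>\<omega>\<in>C. (?A \<omega> < 1 - d \<longleftrightarrow> ?B \<omega> < s') \<and> (?A \<omega> = 1 - d \<longleftrightarrow> ?B \<omega> = s')"
    using order_pattern_cut[OF \<open>finite C\<close> order, of "1 - d"] sim simK_fractK_eq_0_iff d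
    by (auto simp: fractK_ge_0 fractK_lt_1)
  define d' where "d' = 1 - s'"
  have d': "0 < d'" "d' < 1" and s'_eq: "s' = 1 - d'"
    using s' by (simp_all add: d'_def)
  have sim': "simK K (x \<omega> + d) (y \<omega> + d')" if "\<omega> \<in> C" for \<omega>
    using simK_add_fraction[of K "x \<omega>" "y \<omega>" d d'] sim cut that d d' s'_eq by blast
  show ?thesis
  proof (rule that[OF d'], unfold region_equiv_def, intro conjI ballI)
    fix \<omega> assume "\<omega> \<in> C"
    then show "simK K (x \<omega> + d) (y \<omega> + d')" by (rule sim')
  next
    fix \<omega> \<omega>' assume "\<omega> \<in> C" "\<omega>' \<in> C"
    then have "x \<omega> + d > real K \<longleftrightarrow> y \<omega> + d' > real K" "x \<omega>' + d > real K \<longleftrightarrow> y \<omega>' + d' > real K"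
      "?A \<omega> < 1 - d \<longleftrightarrow> ?B \<omega> < 1 - d'" "?A \<omega> = 1 - d \<longleftrightarrow> ?B \<omega> = 1 - d'"
      "?A \<omega>' < 1 - d \<longleftrightarrow> ?B \<omega>' < 1 - d'" "?A \<omega>' = 1 - d \<longleftrightarrow> ?B \<omega>' = 1 - d'"
      "?A \<omega> \<le> ?A \<omega>' \<longleftrightarrow> ?B \<omega> \<le> ?B \<omega>'"
      using sim' simK_gt_iff cut order s'_eq by blast+
    then show "fractK K (x \<omega> + d) \<le> fractK K (x \<omega>' + d) \<longleftrightarrow> fractK K (y \<omega> + d') \<le> fractK K (y \<omega>' + d')"
      unfolding fractK_add_fraction[OF d] fractK_add_fraction[OF d']
      unfolding shifted_fract_le_iff[OF fractK_ge_0 fractK_lt_1 fractK_ge_0 fractK_lt_1 d]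
        shifted_fract_le_iff[OF fractK_ge_0 fractK_lt_1 fractK_ge_0 fractK_lt_1 d']
      by simp
  qed
qed

lemma region_equiv_delay:
  assumes "finite C" and equiv: "region_equiv C K x y" and "0 \<le> t"
  obtains \<tau> where "0 \<le> \<tau>" "region_equiv C K (\<lambda>\<omega>. x \<omega> + t) (\<lambda>\<omega>. y \<omega> + \<tau>)"
proof -
  define m where "m = nat \<lfloor>t\<rfloor>"
  define d where "d = t - real m"
  have t: "t = d + real m" "0 \<le> d" "d < 1"
    using \<open>0 \<le> t\<close> unfolding d_def m_def by linarith+
  show ?thesis
  proof (cases "d = 0")
    case True
    then show ?thesis
      using that[of t] region_equiv_add_nat[OF equiv, of m] t \<open>0 \<le> t\<close> by simp
  next
    case False
    then obtain d' where "0 < d'" "region_equiv C K (\<lambda>\<omega>. x \<omega> + d) (\<lambda>\<omega>. y \<omega> + d')"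
      using region_equiv_add_fraction[OF \<open>finite C\<close> equiv, of d] t by force
    then have "region_equiv C K (\<lambda>\<omega>. x \<omega> + d + real m) (\<lambda>\<omega>. y \<omega> + d' + real m)"
      using region_equiv_add_nat by blast
    then show ?thesis
      using that[of "d' + real m"] \<open>0 < d'\<close> t by (simp add: add.assoc)
  qed
qed

section \<open>Equivalent situations\<close>

lemma st_clock_nonneg: "gsit B \<sigma> \<Longrightarrow> 0 \<le> snd (st B \<sigma>) c os"
proof (induction \<sigma> arbitrary: c os)
  case (Cons \<alpha> \<sigma>)
  then show ?case by (cases \<alpha>) (auto simp: gsit_def Let_def)
qed simp

lemma nu_nonneg: "gsit B \<sigma> \<Longrightarrow> 0 \<le> nu B \<sigma> \<omega>"
  by (auto simp: nu_def st_clock_nonneg split: prod.split)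

lemma nu_Wait: "nu B (Wait t # \<sigma>) = (\<lambda>\<omega>. nu B \<sigma> \<omega> + t)"
  by (auto simp: fun_eq_iff nu_def Let_def)

definition reset_clocks :: "('o, 'a, 'r, 'c) bat \<Rightarrow> ('a, 'o) gact \<Rightarrow> ('a, 'o) sit \<Rightarrow> ('c \<times> 'o list) set" where
  "reset_clocks B \<alpha> \<sigma> = {(c, os). holds (fst (st B \<sigma>)) (snd (st B \<sigma>)) \<alpha> (nth os) (reset_fm B c)}"

lemma nu_Act: "nu B (Act A xs # \<sigma>) = (\<lambda>\<omega>. if \<omega> \<in> reset_clocks B (Act A xs) \<sigma> then 0 else nu B \<sigma> \<omega>)"
  by (auto simp: fun_eq_iff nu_def reset_clocks_def Let_def)

text \<open>Formulas see the action only through atoms a = A(ts), so they cannot tell two waits apart.\<close>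

definition same_action_type :: "('a, 'o) gact \<Rightarrow> ('a, 'o) gact \<Rightarrow> bool" where
  "same_action_type \<alpha> \<beta> \<longleftrightarrow> (\<forall>A xs. \<alpha> = Act A xs \<longleftrightarrow> \<beta> = Act A xs)"

lemma same_action_type_refl [simp]: "same_action_type \<alpha> \<alpha>"
  by (simp add: same_action_type_def)

lemma holds_cong_simK:
  assumes "wf_fm B \<phi>" "\<forall>n\<in>nconsts \<phi>. n \<le> K"
    and "\<forall>r os. length os = rel_ar B r \<longrightarrow> R r os = R' r os"
    and "\<forall>c os. length os = clk_ar B c \<longrightarrow> simK K (Cl c os) (Cl' c os)"
    and "same_action_type a a'"
  shows "holds R Cl a e \<phi> = holds R' Cl' a' e \<phi>"
  using assms
proof (induction \<phi> arbitrary: e)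
  case (FClk c ts op n)
  then have "simK K (Cl c (map (tval e) ts)) (Cl' c (map (tval e) ts))" "n \<le> K" by simp_all
  then show ?case by (simp only: holds.simps) (rule simK_cmpr)
qed (auto simp: same_action_type_def)

lemma holds_approx_cong:
  assumes "wf_fm B \<phi>" "\<forall>n\<in>nconsts \<phi>. n \<le> K" "approx B K \<sigma> \<sigma>'" "same_action_type a a'"
  shows "holds (fst (st B \<sigma>)) (snd (st B \<sigma>)) a e \<phi> = holds (fst (st B \<sigma>')) (snd (st B \<sigma>')) a' e \<phi>"
  using assms(3) by (intro holds_cong_simK[OF assms(1,2) _ _ assms(4)])
    (auto simp: approx_def cong_val_def clk_terms_def nu_def)

lemma clocked_bat_wf:
  assumes "clocked_bat B"
  shows "wf_fm B (poss_fm B A)" "wf_fm B (ssa_rel B r)" "wf_fm B (reset_fm B c)"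
  using assms by (simp_all add: clocked_bat_def)

lemma consts_bounded_fm:
  assumes "consts_bounded B K"
  shows "\<forall>n\<in>nconsts (poss_fm B A). n \<le> K" "\<forall>n\<in>nconsts (ssa_rel B r). n \<le> K"
    "\<forall>n\<in>nconsts (reset_fm B c). n \<le> K"
  using assms by (simp_all add: consts_bounded_def)

context
  fixes B :: "('o, 'a, 'r, 'c) bat" and K :: nat
  assumes clocked: "clocked_bat B" and bounded: "consts_bounded B K"
begin

lemma poss_approx_cong: "approx B K \<sigma> \<sigma>' \<Longrightarrow> poss B \<alpha> \<sigma> = poss B \<alpha> \<sigma>'"
  using holds_approx_cong[OF clocked_bat_wf(1)[OF clocked] consts_bounded_fm(1)[OF bounded]]
  by (cases \<alpha>) simp_all

lemma approx_Cons:
  assumes "approx B K \<sigma> \<sigma>'" "same_action_type \<alpha> \<alpha>'"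
    and "cong_val B K (nu B (\<alpha> # \<sigma>)) (nu B (\<alpha>' # \<sigma>'))"
  shows "approx B K (\<alpha> # \<sigma>) (\<alpha>' # \<sigma>')"
  using assms holds_approx_cong[OF clocked_bat_wf(2)[OF clocked] consts_bounded_fm(2)[OF bounded]]
  by (simp add: approx_def Let_def)

lemma approx_Act:
  assumes "approx B K \<sigma> \<sigma>'"
  shows "approx B K (Act A xs # \<sigma>) (Act A xs # \<sigma>')"
proof (rule approx_Cons[OF assms])
  have reset_eq: "reset_clocks B (Act A xs) \<sigma> = reset_clocks B (Act A xs) \<sigma>'"
    using holds_approx_cong[OF clocked_bat_wf(3)[OF clocked] consts_bounded_fm(3)[OF bounded] assms
        same_action_type_refl[of "Act A xs"]]
    by (simp add: reset_clocks_def)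
  have "region_equiv (clk_terms B) K (nu B \<sigma>) (nu B \<sigma>')"
    using assms by (simp add: approx_def cong_val_eq_region_equiv)
  then show "cong_val B K (nu B (Act A xs # \<sigma>)) (nu B (Act A xs # \<sigma>'))"
    unfolding nu_Act cong_val_eq_region_equiv reset_eq by (rule region_equiv_reset)
qed simp

lemma approx_Wait:
  assumes "approx B K \<sigma> \<sigma>'" "cong_val B K (\<lambda>\<omega>. nu B \<sigma> \<omega> + t) (\<lambda>\<omega>. nu B \<sigma>' \<omega> + t')"
  shows "approx B K (Wait t # \<sigma>) (Wait t' # \<sigma>')"
  using assms by (intro approx_Cons) (simp_all add: nu_Wait same_action_type_def)

end

section \<open>Finitely many classes\<close>

lemma finite_arity_terms: "finite {(f :: 'f::finite, xs :: 'x::finite list). length xs = ar f}"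
proof -
  have "{(f, xs :: 'x list). length xs = ar f} = (\<Union>f. Pair f ` {xs. length xs = ar f})"
    by auto
  then show ?thesis
    using finite_lists_length_eq[of "UNIV :: 'x set"] by simp
qed

definition rel_terms :: "('o, 'a, 'r, 'c) bat \<Rightarrow> ('r \<times> 'o list) set" where
  "rel_terms B = {(r, os). length os = rel_ar B r}"

lemma finite_clk_terms: "finite (clk_terms (B :: ('o::finite, 'a, 'r, 'c::finite) bat))"
  by (simp add: clk_terms_def finite_arity_terms)

lemma finite_rel_terms: "finite (rel_terms (B :: ('o::finite, 'a, 'r::finite, 'c) bat))"
  by (simp add: rel_terms_def finite_arity_terms)

definition region_sig :: "('o, 'a, 'r, 'c) bat \<Rightarrow> nat \<Rightarrow> ('a, 'o) sit
    \<Rightarrow> ('r \<times> 'o list \<Rightarrow> bool) \<times> ('c \<times> 'o list \<Rightarrow> (int \<times> bool) option)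
       \<times> (('c \<times> 'o list) \<times> ('c \<times> 'o list) \<Rightarrow> bool)" where
  "region_sig B K \<sigma> =
     (restrict (\<lambda>(r, os). fst (st B \<sigma>) r os) (rel_terms B),
      restrict (\<lambda>\<omega>. clock_region K (nu B \<sigma> \<omega>)) (clk_terms B),
      restrict (\<lambda>(\<omega>, \<omega>'). fractK K (nu B \<sigma> \<omega>) \<le> fractK K (nu B \<sigma> \<omega>')) (clk_terms B \<times> clk_terms B))"

lemma restrict_eq_restrict_iff: "restrict f A = restrict g A \<longleftrightarrow> (\<forall>x\<in>A. f x = g x)"
  by (metis restrict_apply' restrict_ext)

lemma approx_iff_region_sig: "approx B K \<sigma> \<sigma>' \<longleftrightarrow> region_sig B K \<sigma> = region_sig B K \<sigma>'"
  unfolding approx_def cong_val_eq_region_equiv region_equiv_def simK_iff_clock_region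
    region_sig_def rel_terms_def
  by (auto simp: restrict_eq_restrict_iff)

lemma cls_eq_region_sig: "cls B K \<sigma> = {\<sigma>'. gsit B \<sigma>' \<and> region_sig B K \<sigma>' = region_sig B K \<sigma>}"
  by (simp add: cls_def approx_iff_region_sig)

lemma cls_eq_iff_approx: "gsit B \<sigma> \<Longrightarrow> cls B K \<sigma> = cls B K \<sigma>' \<longleftrightarrow> approx B K \<sigma> \<sigma>'"
  unfolding cls_eq_region_sig approx_iff_region_sig by (auto simp: set_eq_iff)

lemma finite_classes:
  fixes B :: "('o::finite, 'a, 'r::finite, 'c::finite) bat"
  shows "finite (cls B K ` {\<sigma>. gsit B \<sigma>})"
proof -
  let ?R = "insert None (Some ` ({0..int K} \<times> UNIV))"
  have "clock_region K (nu B \<sigma> \<omega>) \<in> ?R" if "gsit B \<sigma>" for \<sigma> \<omega>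
    using clock_region_nonneg[OF nu_nonneg[OF that]] .
  then have "region_sig B K ` {\<sigma>. gsit B \<sigma>} \<subseteq>
      (\<Pi>\<^sub>E _\<in>rel_terms B. UNIV) \<times> (\<Pi>\<^sub>E _\<in>clk_terms B. ?R) \<times> (\<Pi>\<^sub>E _\<in>clk_terms B \<times> clk_terms B. UNIV)"
    by (simp add: region_sig_def image_subset_iff Pi_iff)
  moreover have "finite \<dots>"
    by (intro finite_cartesian_product finite_PiE finite_rel_terms finite_clk_terms finite_SigmaI) auto
  ultimately have "finite (region_sig B K ` {\<sigma>. gsit B \<sigma>})"
    by (rule finite_subset)
  moreover have "cls B K ` {\<sigma>. gsit B \<sigma>} = (\<lambda>z. {\<sigma>'. gsit B \<sigma>' \<and> region_sig B K \<sigma>' = z}) ` region_sig B K ` {\<sigma>. gsit B \<sigma>}"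
    by (auto simp: cls_eq_region_sig)
  ultimately show ?thesis by simp
qed

section \<open>Simulation by the explored actions\<close>

lemma tsuccs_ok_at:
  assumes "tsuccs_ok B ts" "gsit B \<sigma>"
  shows "finite (ts (nu B \<sigma>) K)" "\<forall>\<tau>\<in>ts (nu B \<sigma>) K. 0 \<le> \<tau>"
    "\<forall>\<tau>\<ge>0. \<exists>\<tau>'\<in>ts (nu B \<sigma>) K. cong_val B K (\<lambda>\<omega>. nu B \<sigma> \<omega> + \<tau>) (\<lambda>\<omega>. nu B \<sigma> \<omega> + \<tau>')"
  using assms nu_nonneg[OF assms(2)] unfolding tsuccs_ok_def by blast+

lemma finite_acts:
  fixes B :: "('o::finite, 'a::finite, 'r, 'c) bat"
  assumes "tsuccs_ok B ts" "gsit B \<sigma>"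
  shows "finite (acts B K ts \<sigma>)"
proof -
  have "{Act A (os :: 'o list) | A os. length os = act_ar B A} = case_prod Act ` {(A, os). length os = act_ar B A}"
    by auto
  also have "finite \<dots>"
    by (intro finite_imageI finite_arity_terms)
  finally have "finite {Act A (os :: 'o list) | A os. length os = act_ar B A}" .
  then show ?thesis
    using tsuccs_ok_at(1)[OF assms] by (simp add: acts_def)
qed

lemma acts_legal: "tsuccs_ok B ts \<Longrightarrow> gsit B \<sigma> \<Longrightarrow> \<alpha> \<in> acts B K ts \<sigma> \<Longrightarrow> legal B \<alpha>"
  using tsuccs_ok_at(2) by (fastforce simp: acts_def)

lemma approx_simulation:
  fixes B :: "('o::finite, 'a, 'r, 'c::finite) bat"
  assumes clocked: "clocked_bat B" and bounded: "consts_bounded B K" and tsuccs: "tsuccs_ok B ts"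
    and "gsit B \<sigma>" and approx: "approx B K \<sigma>\<^sub>1 \<sigma>" and "legal B \<alpha>\<^sub>1" "poss B \<alpha>\<^sub>1 \<sigma>\<^sub>1"
  shows "\<exists>\<alpha>\<in>acts B K ts \<sigma>. poss B \<alpha> \<sigma> \<and> approx B K (\<alpha>\<^sub>1 # \<sigma>\<^sub>1) (\<alpha> # \<sigma>)"
proof (cases \<alpha>\<^sub>1)
  case (Act A xs)
  then have "\<alpha>\<^sub>1 \<in> acts B K ts \<sigma>"
    using \<open>legal B \<alpha>\<^sub>1\<close> by (auto simp: acts_def)
  moreover have "poss B \<alpha>\<^sub>1 \<sigma>"
    using poss_approx_cong[OF clocked bounded approx] \<open>poss B \<alpha>\<^sub>1 \<sigma>\<^sub>1\<close> by simp
  moreover have "approx B K (\<alpha>\<^sub>1 # \<sigma>\<^sub>1) (\<alpha>\<^sub>1 # \<sigma>)"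
    using approx_Act[OF clocked bounded approx] Act by simp
  ultimately show ?thesis by blast
next
  case (Wait t)
  then have "0 \<le> t" using \<open>legal B \<alpha>\<^sub>1\<close> by simp
  moreover have "region_equiv (clk_terms B) K (nu B \<sigma>\<^sub>1) (nu B \<sigma>)"
    using approx by (simp add: approx_def cong_val_eq_region_equiv)
  ultimately obtain \<tau> where "0 \<le> \<tau>"
    and delayed: "region_equiv (clk_terms B) K (\<lambda>\<omega>. nu B \<sigma>\<^sub>1 \<omega> + t) (\<lambda>\<omega>. nu B \<sigma> \<omega> + \<tau>)"
    using region_equiv_delay[OF finite_clk_terms] by blast
  then obtain \<tau>' where "\<tau>' \<in> ts (nu B \<sigma>) K"
    and "region_equiv (clk_terms B) K (\<lambda>\<omega>. nu B \<sigma> \<omega> + \<tau>) (\<lambda>\<omega>. nu B \<sigma> \<omega> + \<tau>')"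
    using tsuccs_ok_at(3)[OF tsuccs \<open>gsit B \<sigma>\<close>] by (auto simp: cong_val_eq_region_equiv)
  then have "Wait \<tau>' \<in> acts B K ts \<sigma>" "approx B K (\<alpha>\<^sub>1 # \<sigma>\<^sub>1) (Wait \<tau>' # \<sigma>)"
    using approx_Wait[OF clocked bounded approx] region_equiv_trans[OF delayed] Wait
    by (auto simp: acts_def cong_val_eq_region_equiv)
  then show ?thesis by force
qed

section \<open>Algorithm 1\<close>

definition reachable_sit :: "('o, 'a, 'r, 'c) bat \<Rightarrow> ('a, 'o) sit \<Rightarrow> bool" where
  "reachable_sit B \<sigma> \<longleftrightarrow> gsit B \<sigma> \<and> exec B \<sigma>"

lemma reachable_sit_Nil: "reachable_sit B []"
  by (simp add: reachable_sit_def gsit_def exec_def)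

lemma reachable_sit_Cons:
  "reachable_sit B (\<alpha> # \<sigma>) \<longleftrightarrow> legal B \<alpha> \<and> poss B \<alpha> \<sigma> \<and> reachable_sit B \<sigma>"
  by (auto simp: reachable_sit_def gsit_def exec_def less_Suc_eq_0_disj)

lemma td_trans_Cons: "reachable_sit B (\<alpha> # \<sigma>) \<Longrightarrow> td_trans B K (cls B K \<sigma>) (cls B K (\<alpha> # \<sigma>))"
  unfolding td_trans_def reachable_sit_def by blast

definition expanded :: "('o, 'a, 'r, 'c) bat \<Rightarrow> nat \<Rightarrow> (('c \<times> 'o list \<Rightarrow> real) \<Rightarrow> nat \<Rightarrow> real set)
    \<Rightarrow> (('a, 'o) sit set \<times> ('a, 'o) sit set) set \<Rightarrow> ('a, 'o) sit \<Rightarrow> bool" where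
  "expanded B K ts E \<sigma> \<longleftrightarrow> (\<forall>\<alpha>\<in>acts B K ts \<sigma>. poss B \<alpha> \<sigma> \<longrightarrow> (cls B K \<sigma>, cls B K (\<alpha> # \<sigma>)) \<in> E)"

definition represented :: "('o, 'a, 'r, 'c) bat \<Rightarrow> nat \<Rightarrow> (('c \<times> 'o list \<Rightarrow> real) \<Rightarrow> nat \<Rightarrow> real set)
    \<Rightarrow> ('a, 'o) sit set \<Rightarrow> (('a, 'o) sit set \<times> ('a, 'o) sit set) set
    \<Rightarrow> (('a, 'o) sit \<times> ('a, 'o) gact set) option \<Rightarrow> ('a, 'o) sit set \<Rightarrow> bool" where
  "represented B K ts Op E cur X \<longleftrightarrow> (\<exists>\<sigma>. reachable_sit B \<sigma> \<and> cls B K \<sigma> = X \<and>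
     (\<sigma> \<in> Op \<or> (\<exists>As. cur = Some (\<sigma>, As)) \<or> expanded B K ts E \<sigma>))"

lemma represented_mono:
  assumes "represented B K ts Op E (Some (\<sigma>, As)) X" "Op \<subseteq> Op'" "E \<subseteq> E'"
  shows "represented B K ts Op' E' (Some (\<sigma>, As')) X"
  using assms by (auto simp: represented_def expanded_def)

definition alg_inv :: "('o, 'a, 'r, 'c) bat \<Rightarrow> nat \<Rightarrow> (('c \<times> 'o list \<Rightarrow> real) \<Rightarrow> nat \<Rightarrow> real set)
    \<Rightarrow> ('a, 'o) alg_state \<Rightarrow> bool" where
  "alg_inv B K ts = (\<lambda>(Op, V, E, cur).
     finite Op \<and> (\<forall>\<sigma>\<in>Op. reachable_sit B \<sigma>)
   \<and> (\<forall>\<sigma> As. cur = Some (\<sigma>, As) \<longrightarrow> reachable_sit B \<sigma> \<and> As \<subseteq> acts B K ts \<sigma> \<and>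
        (\<forall>\<alpha>\<in>acts B K ts \<sigma> - As. poss B \<alpha> \<sigma> \<longrightarrow> (cls B K \<sigma>, cls B K (\<alpha> # \<sigma>)) \<in> E))
   \<and> (\<forall>X\<in>V. represented B K ts Op E cur X)
   \<and> (\<forall>(X, Y)\<in>E. td_trans B K X Y \<and> Y \<in> V) \<and> cls B K [] \<in> V)"

lemma alg_inv_init: "alg_inv B K ts (alg_init B K)"
  by (auto simp: alg_inv_def alg_init_def represented_def reachable_sit_Nil intro!: exI[of _ "[]"])

lemma alg_inv_current:
  "alg_inv B K ts (Op, V, E, Some (\<sigma>, As)) \<Longrightarrow> reachable_sit B \<sigma> \<and> As \<subseteq> acts B K ts \<sigma>"
  by (simp add: alg_inv_def)

lemma alg_inv_step:
  assumes "tsuccs_ok B ts" "alg_step B K ts s s'" "alg_inv B K ts s"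
  shows "alg_inv B K ts s'"
  using assms(2)
proof cases
  case (pick \<sigma> Op V E)
  have "represented B K ts (Op - {\<sigma>}) E (Some (\<sigma>, acts B K ts \<sigma>)) X"
    if "represented B K ts Op E None X" for X
    using that unfolding represented_def by blast
  then show ?thesis
    using assms(3) pick unfolding alg_inv_def by auto
next
  case (act_poss \<alpha> As \<sigma> Op V E)
  then have "reachable_sit B \<sigma>" "\<alpha> \<in> acts B K ts \<sigma>"
    using assms(3) by (auto simp: alg_inv_def)
  moreover have "legal B \<alpha>"
    using calculation acts_legal[OF assms(1)] by (auto simp: reachable_sit_def)
  ultimately have new: "reachable_sit B (\<alpha> # \<sigma>)"
    using act_poss by (simp add: reachable_sit_Cons)
  let ?Y = "cls B K (\<alpha> # \<sigma>)"
  have "represented B K ts (if ?Y \<notin> V then Op \<union> {\<alpha> # \<sigma>} else Op) (E \<union> {(cls B K \<sigma>, ?Y)})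
      (Some (\<sigma>, As - {\<alpha>})) X" if "X \<in> V \<union> {?Y}" for X
  proof (cases "X \<in> V")
    case True
    then have "represented B K ts Op E (Some (\<sigma>, As)) X"
      using assms(3) act_poss by (simp add: alg_inv_def)
    then show ?thesis by (rule represented_mono) auto
  next
    case False
    then have "X = ?Y" "?Y \<notin> V" using that by auto
    then show ?thesis
      using new unfolding represented_def by (intro exI[of _ "\<alpha> # \<sigma>"]) simp
  qed
  then show ?thesis
    using assms(3) act_poss new td_trans_Cons[OF new] unfolding alg_inv_def
    by (simp add: Ball_def) blast
next
  case (act_not_poss \<alpha> As \<sigma> Op V E)
  have "represented B K ts Op E (Some (\<sigma>, As - {\<alpha>})) X"
    if "represented B K ts Op E (Some (\<sigma>, As)) X" for X
    using that by (rule represented_mono) auto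
  then show ?thesis
    using assms(3) act_not_poss unfolding alg_inv_def by (simp add: Ball_def) blast
next
  case (loop_done Op V E \<sigma>)
  then have "expanded B K ts E \<sigma>"
    using assms(3) by (simp add: alg_inv_def expanded_def)
  then have "represented B K ts Op E None X"
    if "represented B K ts Op E (Some (\<sigma>, {})) X" for X
    using that unfolding represented_def by blast
  then show ?thesis
    using assms(3) loop_done unfolding alg_inv_def by auto
qed

lemma alg_inv_reachable:
  assumes "tsuccs_ok B ts" "(alg_step B K ts)\<^sup>*\<^sup>* (alg_init B K) s"
  shows "alg_inv B K ts s"
  using assms(2)
proof induction
  case (step s' s'')
  then show ?case using alg_inv_step[OF assms(1)] by blast
qed (rule alg_inv_init)

definition alg_measure :: "('o, 'a, 'r, 'c) bat \<Rightarrow> nat \<Rightarrow> ('a, 'o) alg_state \<Rightarrow> nat \<times> nat \<times> nat" where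
  "alg_measure B K = (\<lambda>(Op, V, E, cur).
     (card (cls B K ` {\<sigma>. gsit B \<sigma>} - V), card Op, case cur of None \<Rightarrow> 0 | Some (\<sigma>, As) \<Rightarrow> Suc (card As)))"

lemma alg_measure_decreases:
  fixes B :: "('o::finite, 'a::finite, 'r::finite, 'c::finite) bat"
  assumes "tsuccs_ok B ts" "alg_step B K ts s s'" "alg_inv B K ts s"
  shows "(alg_measure B K s', alg_measure B K s) \<in> less_than <*lex*> less_than <*lex*> less_than"
proof -
  have shrink: "card (As - {\<alpha>}) < card As" if "s = (Op, V, E, Some (\<sigma>, As))" "\<alpha> \<in> As" for Op V E \<sigma> As \<alpha>
  proof (rule card_Diff1_less[OF _ \<open>\<alpha> \<in> As\<close>])
    have "reachable_sit B \<sigma>" "As \<subseteq> acts B K ts \<sigma>"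
      using alg_inv_current[of B K ts Op V E \<sigma> As] assms(3) that(1) by simp_all
    then show "finite As"
      using finite_acts[OF assms(1)] finite_subset unfolding reachable_sit_def by blast
  qed
  from assms(2) show ?thesis
  proof cases
    case (pick \<sigma> Op V E)
    then have "finite Op"
      using assms(3) by (simp add: alg_inv_def)
    then have "card (Op - {\<sigma>}) < card Op"
      using \<open>\<sigma> \<in> Op\<close> by (rule card_Diff1_less)
    then show ?thesis using pick by (simp add: alg_measure_def)
  next
    case (act_poss \<alpha> As \<sigma> Op V E)
    let ?Y = "cls B K (\<alpha> # \<sigma>)"
    show ?thesis
    proof (cases "?Y \<in> V")
      case True
      then show ?thesis
        using act_poss shrink[OF act_poss(1,3)] by (simp add: alg_measure_def insert_absorb)
    next
      case False
      have "gsit B \<sigma>" "\<alpha> \<in> acts B K ts \<sigma>"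
        using alg_inv_current[OF assms(3)[unfolded act_poss(1)]] act_poss by (auto simp: reachable_sit_def)
      then have "gsit B (\<alpha> # \<sigma>)"
        using acts_legal[OF assms(1)] by (auto simp: gsit_def)
      then have "?Y \<in> cls B K ` {\<sigma>. gsit B \<sigma>} - V" using False by blast
      then have "card (cls B K ` {\<sigma>. gsit B \<sigma>} - V - {?Y}) < card (cls B K ` {\<sigma>. gsit B \<sigma>} - V)"
        using finite_classes by (intro card_Diff1_less) auto
      moreover have "cls B K ` {\<sigma>. gsit B \<sigma>} - insert ?Y V = cls B K ` {\<sigma>. gsit B \<sigma>} - V - {?Y}"
        by blast
      ultimately show ?thesis using act_poss False by (simp add: alg_measure_def)
    qed
  next
    case (act_not_poss \<alpha> As \<sigma> Op V E)
    then show ?thesis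
      using shrink[OF act_not_poss(1,3)] by (simp add: alg_measure_def)
  next
    case (loop_done Op V E \<sigma>)
    then show ?thesis by (simp add: alg_measure_def)
  qed
qed

lemma alg_terminates:
  fixes B :: "('o::finite, 'a::finite, 'r::finite, 'c::finite) bat"
  assumes "tsuccs_ok B ts"
  shows "\<nexists>f. f 0 = alg_init B K \<and> (\<forall>n. alg_step B K ts (f n) (f (Suc n)))"
proof
  assume "\<exists>f. f 0 = alg_init B K \<and> (\<forall>n. alg_step B K ts (f n) (f (Suc n)))"
  then obtain f where start: "f 0 = alg_init B K" and steps: "\<And>n. alg_step B K ts (f n) (f (Suc n))"
    by blast
  have "alg_inv B K ts (f n)" for n
  proof (induction n)
    case 0
    then show ?case using start alg_inv_init by simp
  next
    case (Suc n)
    then show ?case using alg_inv_step[OF assms steps] by blast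
  qed
  then have "((alg_measure B K \<circ> f) (Suc n), (alg_measure B K \<circ> f) n) \<in> less_than <*lex*> less_than <*lex*> less_than" for n
    using alg_measure_decreases[OF assms steps] by simp
  moreover have "wf (less_than <*lex*> less_than <*lex*> less_than)"
    by auto
  ultimately show False
    unfolding wf_iff_no_infinite_down_chain by blast
qed

lemma successively_invariant_mono:
  assumes "successively R (x # xs)" "x \<in> V" "\<And>x y. x \<in> V \<Longrightarrow> R x y \<Longrightarrow> S x y \<and> y \<in> V"
  shows "successively S (x # xs)"
  using assms(1,2)
proof (induction xs arbitrary: x)
  case (Cons y xs)
  then show ?case using assms(3) by auto
qed simp

lemma td_trans_in_final_edges:
  fixes B :: "('o::finite, 'a, 'r, 'c::finite) bat"
  assumes clocked: "clocked_bat B" and bounded: "consts_bounded B K" and tsuccs: "tsuccs_ok B ts"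
    and inv: "alg_inv B K ts ({}, V, E, None)" and "X \<in> V" "td_trans B K X Y"
  shows "(X, Y) \<in> E"
proof -
  obtain \<sigma> where "reachable_sit B \<sigma>" "cls B K \<sigma> = X" and expanded: "expanded B K ts E \<sigma>"
    using inv \<open>X \<in> V\<close> by (auto simp: alg_inv_def represented_def)
  moreover obtain \<sigma>\<^sub>1 \<alpha>\<^sub>1 where step: "reachable_sit B (\<alpha>\<^sub>1 # \<sigma>\<^sub>1)" "X = cls B K \<sigma>\<^sub>1" "Y = cls B K (\<alpha>\<^sub>1 # \<sigma>\<^sub>1)"
    using \<open>td_trans B K X Y\<close> by (auto simp: td_trans_def reachable_sit_def)
  ultimately have "approx B K \<sigma>\<^sub>1 \<sigma>"
    using cls_eq_iff_approx by (metis reachable_sit_Cons reachable_sit_def)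
  then obtain \<alpha> where "\<alpha> \<in> acts B K ts \<sigma>" "poss B \<alpha> \<sigma>" "approx B K (\<alpha>\<^sub>1 # \<sigma>\<^sub>1) (\<alpha> # \<sigma>)"
    using approx_simulation[OF clocked bounded tsuccs] step(1) \<open>reachable_sit B \<sigma>\<close>
    by (metis reachable_sit_Cons reachable_sit_def)
  then show ?thesis
    using expanded step \<open>cls B K \<sigma> = X\<close> cls_eq_iff_approx
    by (metis expanded_def reachable_sit_def)
qed

lemma alg_final_paths:
  fixes B :: "('o::finite, 'a, 'r, 'c::finite) bat"
  assumes "clocked_bat B" "consts_bounded B K" "tsuccs_ok B ts"
    and "alg_inv B K ts s" "alg_final s" "p \<noteq> []" "hd p = cls B K []"
  shows "successively (\<lambda>X Y. (X, Y) \<in> alg_edges s) p \<longleftrightarrow> successively (td_trans B K) p"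
proof -
  obtain V E where s: "s = ({}, V, E, None)"
    using \<open>alg_final s\<close> by (auto simp: alg_final_def split: prod.splits)
  then have sound: "td_trans B K X Y \<and> Y \<in> V" if "(X, Y) \<in> E" for X Y
    using \<open>alg_inv B K ts s\<close> that by (auto simp: alg_inv_def)
  obtain q where p: "p = cls B K [] # q" and "cls B K [] \<in> V"
    using assms(4,6,7) s by (cases p) (auto simp: alg_inv_def)
  show ?thesis
  proof
    assume "successively (\<lambda>X Y. (X, Y) \<in> alg_edges s) p"
    then show "successively (td_trans B K) p"
      by (rule successively_mono) (use sound s in \<open>auto simp: alg_edges_def\<close>)
  next
    assume "successively (td_trans B K) p"
    then show "successively (\<lambda>X Y. (X, Y) \<in> alg_edges s) p"
      unfolding p using \<open>cls B K [] \<in> V\<close>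
      by (rule successively_invariant_mono)
        (use sound td_trans_in_final_edges[OF assms(1-3) \<open>alg_inv B K ts s\<close>[unfolded s]] s
          in \<open>auto simp: alg_edges_def\<close>)
  qed
qed

theorem lemma6:
  fixes B :: "('o::finite, 'a::finite, 'r::finite, 'c::finite) bat"
    and K :: nat
    and ts :: "('c \<times> 'o list \<Rightarrow> real) \<Rightarrow> nat \<Rightarrow> real set"
  assumes "clocked_bat B"
    and "consts_bounded B K"
    and "tsuccs_ok B ts"
  shows "(\<nexists>f. f 0 = alg_init B K \<and> (\<forall>n. alg_step B K ts (f n) (f (Suc n))))
       \<and> (\<forall>s. (alg_step B K ts)\<^sup>*\<^sup>* (alg_init B K) s \<and> alg_final s \<longrightarrow>
              (\<forall>p. p \<noteq> [] \<and> hd p = cls B K [] \<longrightarrow>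
                 (successively (\<lambda>X Y. (X, Y) \<in> alg_edges s) p
                  \<longleftrightarrow> successively (td_trans B K) p)))"
  using alg_terminates[OF assms(3)] alg_final_paths[OF assms] alg_inv_reachable[OF assms(3)]
  by blast

end
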